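(* Let $n\ge1$ and $z\in\{1,\dots,n+1\}$, and let $v_{n,z}=(a_1,\dots,a_n)$ with $a_i=z+1-i$ if $i<z$ and $a_i=1$ if $i\ge z$. Then there is a unique positive integral diamond of Dynkin type $\mathbb{A}_n$ whose associated vector is $v_{n,z}$.
   Context: An $\mathbb{A}_n$-diamond over an integral domain $\mathbf{R}$ is a family $A=(a_{i,j})$ of elements of $\mathbf{R}$, with $a_{1,j}$ for $1\le j\le n+1$ and $a_{2,j}$ for $0\le j\le n$, such that (D1) $a_{2,0}=a_{1,n+1}=1$ and (D2) $a_{1,j}a_{2,j}-a_{2,j-1}a_{1,j+1}=1$ for $1\le j\le n$. For $\mathbf{R}=\mathbb{Z}$, $A$ is a positive integral diamond of Dynkin type $\mathbb{A}_n$ if it also satisfies (D3): there are integers $a,m_a$ with $1\le a\le\lfloor (n+2)/2\rfloor$ such that either $(a_{1,1},a_{2,1})=(a,a+m_a)$ or $(a_{1,1},a_{2,1})=(a+m_a,a)$, and $a_{1,2}=a^2+am_a-1$, where $1\le m_1\le n$ when $a=1$ and $0\le m_a\le n+2(1-a)$ when $a>1$. The vector associated to $A$ is its first column $v_A=(a_{1,1},\dots,a_{1,n})$. The vectors $v_{n,z}$ are called seed vectors. *)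

theory Defs
  imports Main
begin

text \<open>An A_n-diamond over int: a family a1 j (1 \<le> j \<le> n+1), a2 j (0 \<le> j \<le> n),
  represented by two functions nat \<Rightarrow> int; values outside these index ranges are irrelevant.\<close>

definition An_diamond :: "nat \<Rightarrow> (nat \<Rightarrow> int) \<Rightarrow> (nat \<Rightarrow> int) \<Rightarrow> bool" where
  "An_diamond n a1 a2 \<longleftrightarrow>
     a2 0 = 1 \<and> a1 (n + 1) = 1 \<and>
     (\<forall>j\<in>{1..n}. a1 j * a2 j - a2 (j - 1) * a1 (j + 1) = 1)"

definition D3 :: "nat \<Rightarrow> (nat \<Rightarrow> int) \<Rightarrow> (nat \<Rightarrow> int) \<Rightarrow> bool" where
  "D3 n a1 a2 \<longleftrightarrow>
     (\<exists>a m :: int. 1 \<le> a \<and> a \<le> (int n + 2) div 2 \<and>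
        ((a1 1, a2 1) = (a, a + m) \<or> (a1 1, a2 1) = (a + m, a)) \<and>
        a1 2 = a ^ 2 + a * m - 1 \<and>
        (a = 1 \<longrightarrow> 1 \<le> m \<and> m \<le> int n) \<and>
        (a > 1 \<longrightarrow> 0 \<le> m \<and> m \<le> int n + 2 * (1 - a)))"

definition positive_integral_diamond :: "nat \<Rightarrow> (nat \<Rightarrow> int) \<Rightarrow> (nat \<Rightarrow> int) \<Rightarrow> bool" where
  "positive_integral_diamond n a1 a2 \<longleftrightarrow> An_diamond n a1 a2 \<and> D3 n a1 a2"

definition same_diamond :: "nat \<Rightarrow> (nat \<Rightarrow> int) \<times> (nat \<Rightarrow> int) \<Rightarrow> (nat \<Rightarrow> int) \<times> (nat \<Rightarrow> int) \<Rightarrow> bool" where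
  "same_diamond n A B \<longleftrightarrow>
     (\<forall>j\<in>{1..n+1}. fst A j = fst B j) \<and> (\<forall>j\<in>{0..n}. snd A j = snd B j)"

definition seed_vector :: "nat \<Rightarrow> nat \<Rightarrow> int" where
  "seed_vector z i = (if i < z then int z + 1 - int i else 1)"

definition has_vector :: "nat \<Rightarrow> (nat \<Rightarrow> int) \<Rightarrow> (nat \<Rightarrow> int) \<Rightarrow> bool" where
  "has_vector n a1 v \<longleftrightarrow> (\<forall>i\<in>{1..n}. a1 i = v i)"

end

theory Submission
  imports Defs
begin

text \<open>Relation (D2) reads \<open>a\<^sub>1\<^sub>,\<^sub>j a\<^sub>2\<^sub>,\<^sub>j = 1 + a\<^sub>2\<^sub>,\<^sub>j\<^sub>-\<^sub>1 a\<^sub>1\<^sub>,\<^sub>j\<^sub>+\<^sub>1\<close>, so when the first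
  row has no zero entries it determines the second row recursively from \<open>a\<^sub>2\<^sub>,\<^sub>0 = 1\<close>; this gives
  uniqueness. For existence, the first row \<open>v\<^sub>n\<^sub>,\<^sub>z\<close> is completed by the second row
  \<open>(1, \<dots>, 1, 2, 3, \<dots>, n - z + 2)\<close>, and (D3) holds with \<open>a = 1\<close>.\<close>

lemma An_diamond_second_row_unique:
  assumes A: "An_diamond n a1 a2" and B: "An_diamond n b1 b2"
    and same_row: "\<forall>j\<in>{1..n}. a1 j = b1 j" and nonzero: "\<forall>j\<in>{1..n}. a1 j \<noteq> 0"
    and "j \<le> n"
  shows "a2 j = b2 j"
  using \<open>j \<le> n\<close>
proof (induction j)
  case 0
  then show ?case using A B unfolding An_diamond_def by simp
next
  case (Suc j)
  have IH: "a2 j = b2 j" using Suc by simp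
  have next_same: "a1 (Suc j + 1) = b1 (Suc j + 1)"
    using A B same_row Suc.prems unfolding An_diamond_def by (cases "Suc j = n") auto
  have "a1 (Suc j) * a2 (Suc j) = 1 + a2 j * a1 (Suc j + 1)"
    using A Suc.prems unfolding An_diamond_def by (auto dest!: bspec[of _ _ "Suc j"])
  also have "\<dots> = 1 + b2 j * b1 (Suc j + 1)" using IH next_same by simp
  also have "\<dots> = b1 (Suc j) * b2 (Suc j)"
    using B Suc.prems unfolding An_diamond_def by (auto dest!: bspec[of _ _ "Suc j"])
  also have "\<dots> = a1 (Suc j) * b2 (Suc j)" using same_row Suc.prems by simp
  finally show ?case using nonzero Suc.prems by simp
qed

definition seed_second_row :: "nat \<Rightarrow> nat \<Rightarrow> int" where
  "seed_second_row z j = (if j < z then 1 else int j - int z + 2)"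

lemma An_diamond_seed:
  assumes "z \<in> {1..n+1}"
  shows "An_diamond n (seed_vector z) (seed_second_row z)"
  using assms unfolding An_diamond_def seed_vector_def seed_second_row_def
  by (auto simp: algebra_simps)

lemma D3_seed:
  assumes "n \<ge> 1" and "z \<in> {1..n+1}"
  shows "D3 n (seed_vector z) (seed_second_row z)"
proof -
  have a_range: "1 \<le> (int n + 2) div 2" using assms by simp
  show ?thesis
  proof (cases "z = 1")
    case True
    with a_range assms show ?thesis
      unfolding D3_def seed_vector_def seed_second_row_def
      by (intro exI[of _ 1] exI[of _ 1]) auto
  next
    case False
    with a_range assms show ?thesis
      unfolding D3_def seed_vector_def seed_second_row_def
      by (intro exI[of _ 1] exI[of _ "int z - 1"]) auto
  qed
qed

theorem proposition10:
  fixes n z :: nat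
  assumes "n \<ge> 1" and "z \<in> {1..n+1}"
  shows "\<exists>A. positive_integral_diamond n (fst A) (snd A) \<and> has_vector n (fst A) (seed_vector z) \<and>
           (\<forall>B. positive_integral_diamond n (fst B) (snd B) \<and> has_vector n (fst B) (seed_vector z)
                \<longrightarrow> same_diamond n A B)"
proof (rule exI[of _ "(seed_vector z, seed_second_row z)"], intro conjI allI impI)
  have seed: "An_diamond n (seed_vector z) (seed_second_row z)"
    using An_diamond_seed[OF assms(2)] .
  then show "positive_integral_diamond n (fst (seed_vector z, seed_second_row z))
      (snd (seed_vector z, seed_second_row z))"
    using D3_seed[OF assms] unfolding positive_integral_diamond_def by simp
  show "has_vector n (fst (seed_vector z, seed_second_row z)) (seed_vector z)"
    unfolding has_vector_def by simp
  fix B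
  assume "positive_integral_diamond n (fst B) (snd B) \<and> has_vector n (fst B) (seed_vector z)"
  then have B: "An_diamond n (fst B) (snd B)" and first_row: "\<forall>j\<in>{1..n}. seed_vector z j = fst B j"
    unfolding positive_integral_diamond_def has_vector_def by auto
  have "fst B (n + 1) = seed_vector z (n + 1)"
    using B assms(2) unfolding An_diamond_def seed_vector_def by simp
  moreover have "\<forall>j\<in>{1..n}. seed_vector z j \<noteq> 0" unfolding seed_vector_def by auto
  ultimately show "same_diamond n (seed_vector z, seed_second_row z) B"
    using first_row An_diamond_second_row_unique[OF seed B first_row]
    unfolding same_diamond_def by (auto simp: le_Suc_eq)
qed

end
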